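(* Let $F$ be a finite field with $q$ elements and $G$ a finite abelian group of order $m$. For any $(r,\delta)\in(0,1)\times(0,1-q^{-1})$ with $r<g_q(\delta)$, there exists a sequence of quasi-$FG$ codes $C_1,C_2,\dots$ such that: (i) the length of $C_i$ tends to infinity; (ii) $\lim_{i\to\infty}R(C_i)=r$; (iii) $\lim_{i\to\infty}\Delta(C_i)\ge\delta$.
   Context: A quasi-$FG$ code of index $n$ is an $FG$-submodule $C$ of $(FG)^n$, where $FG$ is the group algebra, each element $\sum_{z\in G}a_zz$ is identified with the word $(a_z)_{z\in G}\in F^m$ and elements of $(FG)^n$ with concatenated words of length $mn$ over $F$ (so $C$ has length $mn$). Its rate is $R(C)=\dim_F C/(mn)$ and its relative distance is $\Delta(C)=\mathrm{w}(C)/(mn)$, where $\mathrm{w}(C)$ is the minimum Hamming weight of the nonzero codewords. $h_q(x)=x\log_q(q-1)-x\log_q x-(1-x)\log_q(1-x)$ (with $0\log_q0=0$), $g_q(x)=1-h_q(x)$. *)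

theory Defs
  imports "HOL-Analysis.Analysis" "HOL-Library.Function_Algebras"
begin

text \<open>Group algebra FG: elements are functions G \<Rightarrow> F (coefficient vectors (a_z)_{z\<in>G}).
  The finite abelian group G is a finite type of class ab_group_add (written additively).\<close>

definition ga_mult :: "('g::{ab_group_add,finite} \<Rightarrow> 'f::field) \<Rightarrow> ('g \<Rightarrow> 'f) \<Rightarrow> ('g \<Rightarrow> 'f)" where
  "ga_mult a b = (\<lambda>z. \<Sum>x\<in>UNIV. a x * b (z - x))"

text \<open>Elements of (FG)^n: functions c :: nat \<Rightarrow> G \<Rightarrow> F with c j = 0 for j \<ge> n.\<close>

definition words :: "nat \<Rightarrow> (nat \<Rightarrow> 'g \<Rightarrow> 'f::zero) set" where
  "words n = {c. \<forall>j\<ge>n. c j = (\<lambda>_. 0)}"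

definition quasi_FG_code :: "nat \<Rightarrow> (nat \<Rightarrow> 'g::{ab_group_add,finite} \<Rightarrow> 'f::field) set \<Rightarrow> bool" where
  "quasi_FG_code n C \<longleftrightarrow> C \<subseteq> words n \<and> (\<lambda>_ _. 0) \<in> C \<and>
     (\<forall>c\<in>C. \<forall>d\<in>C. (\<lambda>j z. c j z + d j z) \<in> C) \<and>
     (\<forall>a. \<forall>c\<in>C. (\<lambda>j. ga_mult a (c j)) \<in> C)"

definition word_scale :: "'f::field \<Rightarrow> (nat \<Rightarrow> 'g \<Rightarrow> 'f) \<Rightarrow> (nat \<Rightarrow> 'g \<Rightarrow> 'f)" where
  "word_scale s c = (\<lambda>j z. s * c j z)"

definition dimF :: "(nat \<Rightarrow> 'g \<Rightarrow> 'f::field) set \<Rightarrow> nat" where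
  "dimF C = vector_space.dim (word_scale :: 'f \<Rightarrow> _) C"

definition hweight :: "nat \<Rightarrow> (nat \<Rightarrow> 'g::finite \<Rightarrow> 'f::zero) \<Rightarrow> nat" where
  "hweight n c = card {(j, z). j < n \<and> c j z \<noteq> 0}"

definition min_weight :: "nat \<Rightarrow> (nat \<Rightarrow> 'g::finite \<Rightarrow> 'f::zero) set \<Rightarrow> nat" where
  "min_weight n C = Min {hweight n c | c. c \<in> C \<and> c \<noteq> (\<lambda>_ _. 0)}"

definition code_rate :: "nat \<Rightarrow> (nat \<Rightarrow> 'g::{ab_group_add,finite} \<Rightarrow> 'f::field) set \<Rightarrow> real" where
  "code_rate n C = real (dimF C) / (real CARD('g) * real n)"

definition rel_dist :: "nat \<Rightarrow> (nat \<Rightarrow> 'g::{ab_group_add,finite} \<Rightarrow> 'f::field) set \<Rightarrow> real" where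
  "rel_dist n C = real (min_weight n C) / (real CARD('g) * real n)"

definition xlogx :: "real \<Rightarrow> real \<Rightarrow> real" where
  "xlogx q x = (if x = 0 then 0 else x * log q x)"

definition hq :: "real \<Rightarrow> real \<Rightarrow> real" where
  "hq q x = x * log q (q - 1) - xlogx q x - xlogx q (1 - x)"

definition gq :: "real \<Rightarrow> real \<Rightarrow> real" where
  "gq q x = 1 - hq q x"

end

theory Submission
  imports Defs
begin

text \<open>Random coding over systematic codes. For a \<open>k \<times> N\<close> matrix \<open>A\<close> over \<open>FG\<close>, the words
  \<open>(u, u A)\<close> with \<open>u \<in> (FG)^k\<close> form a quasi-\<open>FG\<close> code of index \<open>n = k + N\<close> and rate
  \<open>k / n\<close>. Fix a nonzero message \<open>u\<close> and let \<open>J\<close> be the ideal generated by its entries.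
  The map \<open>A \<mapsto> u A\<close> is linear onto \<open>J^N\<close>, so it hits every element equally often. Summed over
  all \<open>u\<close> generating \<open>J\<close>, the number of matrices for which \<open>(u, u A)\<close> has weight at most
  \<open>\<delta> m n\<close> is therefore at most the number of all matrices times the number of such light words
  in \<open>J^n\<close>, divided by \<open>|J|^N\<close>. If \<open>S \<subseteq> G\<close> is an information set of \<open>J\<close>, so that
  \<open>|J| = q^|S|\<close>, then every light word of \<open>J^n\<close> is light on some translate \<open>g + S\<close>, which is
  again an information set because \<open>J\<close> is translation invariant; a Hamming-ball estimate then
  leaves at most \<open>m q^(h_q(\<delta>) n |S|)\<close> light words. Since there are finitely many ideals, some
  matrix makes every nonzero codeword heavy as soon as \<open>q^(N - h_q(\<delta>) n)\<close> exceeds a constant.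
  With \<open>k = \<lfloor>r n\<rfloor>\<close> the exponent is at least \<open>(g_q(\<delta>) - r) n\<close>, which tends to infinity.
  Finally a subsequence makes the relative distances, which lie in \<open>[\<delta>, 1]\<close>, converge.\<close>

section \<open>Convolution in the group algebra\<close>

lemma sum_fun_apply: "(\<Sum>i\<in>A. f i) x = (\<Sum>i\<in>A. f i x)"
  by (induction A rule: infinite_finite_induct) auto

lemma ga_mult_add_left: "ga_mult (a + b) c = ga_mult a c + ga_mult b c"
  by (auto simp: ga_mult_def fun_eq_iff distrib_right sum.distrib)

lemma ga_mult_add_right: "ga_mult a (b + c) = ga_mult a b + ga_mult a c"
  by (auto simp: ga_mult_def fun_eq_iff distrib_left sum.distrib)

lemma ga_mult_diff_right: "ga_mult a (b - c) = ga_mult a b - ga_mult a c"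
  by (auto simp: ga_mult_def fun_eq_iff right_diff_distrib sum_subtractf)

lemma ga_mult_zero_left [simp]: "ga_mult 0 c = 0" "ga_mult (\<lambda>_. 0) c = 0"
  by (auto simp: ga_mult_def fun_eq_iff)

lemma ga_mult_zero_right [simp]: "ga_mult a 0 = 0" "ga_mult a (\<lambda>_. 0) = 0"
  by (auto simp: ga_mult_def fun_eq_iff)

lemma ga_mult_sum_right: "ga_mult a (\<Sum>i\<in>A. f i) = (\<Sum>i\<in>A. ga_mult a (f i))"
  by (simp add: ga_mult_def fun_eq_iff sum_fun_apply sum_distrib_left sum.swap[of _ A])

lemma ga_mult_scale_left: "ga_mult (\<lambda>z. s * a z) c = (\<lambda>z. s * ga_mult a c z)"
  by (auto simp: ga_mult_def fun_eq_iff sum_distrib_left mult.assoc)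

lemma ga_mult_scale_right: "ga_mult a (\<lambda>z. s * c z) = (\<lambda>z. s * ga_mult a c z)"
  by (auto simp: ga_mult_def fun_eq_iff sum_distrib_left mult.left_commute)

lemma ga_mult_assoc: "ga_mult a (ga_mult b c) = ga_mult (ga_mult a b) c"
proof (rule ext)
  fix z
  have "ga_mult a (ga_mult b c) z = (\<Sum>x\<in>UNIV. \<Sum>y\<in>UNIV. a x * (b y * c (z - x - y)))"
    by (simp add: ga_mult_def sum_distrib_left)
  also have "\<dots> = (\<Sum>x\<in>UNIV. \<Sum>w\<in>UNIV. a x * (b (w - x) * c (z - w)))"
  proof (rule sum.cong[OF refl])
    fix x
    show "(\<Sum>y\<in>UNIV. a x * (b y * c (z - x - y))) = (\<Sum>w\<in>UNIV. a x * (b (w - x) * c (z - w)))"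
      by (rule sum.reindex_bij_witness[of _ "\<lambda>w. w - x" "\<lambda>y. y + x"]) (auto simp: algebra_simps)
  qed
  also have "\<dots> = (\<Sum>w\<in>UNIV. \<Sum>x\<in>UNIV. a x * (b (w - x) * c (z - w)))"
    by (rule sum.swap)
  also have "\<dots> = ga_mult (ga_mult a b) c z"
    by (simp add: ga_mult_def sum_distrib_right mult.assoc)
  finally show "ga_mult a (ga_mult b c) z = ga_mult (ga_mult a b) c z" .
qed

definition ga_one :: "'g::ab_group_add \<Rightarrow> 'f::field" where
  "ga_one = (\<lambda>z. if z = 0 then 1 else 0)"

lemma ga_mult_one_right [simp]: "ga_mult a ga_one = a"
proof (rule ext)
  fix z
  have "ga_mult a ga_one z = (\<Sum>x\<in>UNIV. if x = z then a x else 0)"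
    unfolding ga_mult_def ga_one_def by (rule sum.cong) auto
  then show "ga_mult a ga_one z = a z" by simp
qed

definition translate :: "'g::ab_group_add \<Rightarrow> ('g \<Rightarrow> 'f) \<Rightarrow> 'g \<Rightarrow> 'f" where
  "translate g x = (\<lambda>z. x (z - g))"

lemma translate_ga_mult: "translate g (ga_mult a c) = ga_mult a (translate g c)"
  by (auto simp: translate_def ga_mult_def fun_eq_iff algebra_simps)

lemma translate_sum: "translate g (\<Sum>i\<in>A. f i) = (\<Sum>i\<in>A. translate g (f i))"
  by (simp add: fun_eq_iff translate_def sum_fun_apply)

section \<open>Hamming balls\<close>

lemma card_field_ge2: "CARD('f::{field,finite}) \<ge> 2"
proof -
  have "card {0::'f, 1} \<le> CARD('f)"
    by (rule card_mono) auto
  then show ?thesis by simp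
qed

text \<open>The identity \<open>q powr - hq q \<delta> = (\<delta> / (q - 1)) powr \<delta> * (1 - \<delta>) powr (1 - \<delta>)\<close>
  in logarithmic form.\<close>

lemma hq_mult_ln:
  assumes "0 < \<delta>" "\<delta> < 1" "1 < q"
  shows "hq q \<delta> * ln q = - (\<delta> * ln (\<delta> / (q - 1)) + (1 - \<delta>) * ln (1 - \<delta>))"
proof -
  have "ln q > 0" using assms(3) by simp
  then show ?thesis
    using assms by (simp add: hq_def xlogx_def log_def ln_div field_simps)
qed

lemma powr_neg_hq_le:
  fixes q \<delta> :: real and c m :: nat
  assumes q: "1 < q" and \<delta>: "0 < \<delta>" "\<delta> \<le> 1 - 1 / q" and c: "c \<le> m" "real c \<le> \<delta> * m"
  shows "q powr (- hq q \<delta> * m) \<le> (\<delta> / (q - 1)) ^ c * (1 - \<delta>) ^ (m - c)"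
proof -
  define a where "a = \<delta> / (q - 1)"
  define b where "b = 1 - \<delta>"
  have "0 < 1 / q" using q by simp
  then have \<delta>1: "\<delta> < 1" using \<delta> by linarith
  have a0: "a > 0" and b0: "b > 0" using \<delta> q \<delta>1 by (simp_all add: a_def b_def)
  have "\<delta> * q \<le> q - 1" using \<delta> q by (simp add: field_simps)
  then have "a \<le> b" using q by (simp add: a_def b_def field_simps)
  have "ln (q powr (- hq q \<delta> * m)) = m * - (hq q \<delta> * ln q)"
    using q by (simp add: ln_powr)
  also have "\<dots> = m * (\<delta> * ln a + (1 - \<delta>) * ln b)"
    using q by (subst hq_mult_ln[OF \<delta>(1) \<delta>1]) (simp_all add: a_def b_def)
  also have "\<dots> \<le> c * ln a + (real m - c) * ln b"
  proof -
    have "(\<delta> * m - c) * (ln b - ln a) \<ge> 0"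
      using c a0 \<open>a \<le> b\<close> by simp
    then show ?thesis by (simp add: algebra_simps)
  qed
  also have "\<dots> = ln (a ^ c * b ^ (m - c))"
    using a0 b0 c by (simp add: ln_mult ln_realpow of_nat_diff)
  finally show ?thesis
    using a0 b0 q by (subst (asm) ln_le_cancel_iff) (auto simp: a_def b_def)
qed

lemma prod_if_zero_eq_power:
  assumes "finite T"
  shows "(\<Prod>t\<in>T. if w t = 0 then b else a) = a ^ card {t\<in>T. w t \<noteq> 0} * b ^ (card T - card {t\<in>T. w t \<noteq> 0})"
proof -
  have "T \<inter> {t. w t = 0} = T - {t\<in>T. w t \<noteq> 0}" "T \<inter> - {t. w t = 0} = {t\<in>T. w t \<noteq> 0}"
    by auto
  moreover have "card (T - {t\<in>T. w t \<noteq> 0}) = card T - card {t\<in>T. w t \<noteq> 0}"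
    by (rule card_Diff_subset) (use assms in auto)
  ultimately show ?thesis
    by (simp add: prod.If_cases[OF assms] mult.commute)
qed

lemma card_hamming_ball_le:
  fixes T :: "'a set" and \<delta> :: real
  defines "q \<equiv> real CARD('f::{field,finite})"
  assumes T: "finite T" and \<delta>: "0 < \<delta>" "\<delta> \<le> 1 - 1 / q"
  shows "real (card {w \<in> T \<rightarrow>\<^sub>E (UNIV::'f set). real (card {t\<in>T. w t \<noteq> 0}) \<le> \<delta> * card T})
           \<le> q powr (hq q \<delta> * card T)"
proof -
  have q1: "q > 1" using card_field_ge2[where 'f='f] by (simp add: q_def)
  have "0 < 1 / q" using q1 by simp
  then have "0 < 1 - \<delta>" using \<delta> by linarith
  have "0 < \<delta> / (q - 1)" using \<delta> q1 by simp
  txt \<open>Weights \<open>1 - \<delta>\<close> on \<open>0\<close> and \<open>\<delta> / (q - 1)\<close> elsewhere form a probability distribution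
    on \<open>F\<close>, whose product measure gives every word of the ball mass at least
    \<open>q powr (- hq q \<delta> * card T)\<close>.\<close>
  define f where "f = (\<lambda>v::'f. if v = 0 then 1 - \<delta> else \<delta> / (q - 1))"
  have "(\<Sum>v\<in>UNIV. f v) = f 0 + (\<Sum>v\<in>UNIV - {0}. f v)"
    by (simp add: sum.remove)
  also have "(\<Sum>v\<in>UNIV - {0}. f v) = (\<Sum>v::'f\<in>UNIV - {0}. \<delta> / (q - 1))"
    by (rule sum.cong) (auto simp: f_def)
  also have "f 0 + \<dots> = 1" using q1 by (simp add: f_def q_def card_Diff_singleton)
  finally have sumf: "(\<Sum>v\<in>UNIV. f v) = 1" .
  define L where "L = {w \<in> T \<rightarrow>\<^sub>E (UNIV::'f set). real (card {t\<in>T. w t \<noteq> 0}) \<le> \<delta> * card T}"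
  have low: "q powr (- hq q \<delta> * card T) \<le> (\<Prod>t\<in>T. f (w t))" if "w \<in> L" for w
  proof -
    have "card {t\<in>T. w t \<noteq> 0} \<le> card T" by (rule card_mono[OF T]) auto
    then have "q powr (- hq q \<delta> * card T)
        \<le> (\<delta> / (q - 1)) ^ card {t\<in>T. w t \<noteq> 0} * (1 - \<delta>) ^ (card T - card {t\<in>T. w t \<noteq> 0})"
      using that by (intro powr_neg_hq_le[OF q1 \<delta>]) (simp_all add: L_def)
    then show ?thesis by (simp add: f_def prod_if_zero_eq_power[OF T])
  qed
  have "real (card L) * q powr (- hq q \<delta> * card T) \<le> (\<Sum>w\<in>L. \<Prod>t\<in>T. f (w t))"
    using sum_mono[OF low] by simp
  also have "\<dots> \<le> (\<Sum>w\<in>T \<rightarrow>\<^sub>E (UNIV::'f set). \<Prod>t\<in>T. f (w t))"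
    by (rule sum_mono2) (use T \<open>0 < 1 - \<delta>\<close> \<open>0 < \<delta> / (q - 1)\<close> in
        \<open>auto simp: L_def f_def finite_PiE intro!: prod_nonneg\<close>)
  also have "\<dots> = 1"
    using prod_sum_PiE[OF T, of "\<lambda>_. UNIV" "\<lambda>_ v. f v"] sumf by simp
  finally show ?thesis
    using q1 by (simp add: L_def powr_minus divide_simps)
qed

section \<open>Information sets of subspaces of \<open>F\<^sup>G\<close>\<close>

definition information_set :: "('g \<Rightarrow> 'f) set \<Rightarrow> 'g set \<Rightarrow> bool" where
  "information_set I S \<longleftrightarrow>
     (\<forall>f. \<exists>x\<in>I. \<forall>s\<in>S. x s = f s) \<and> (\<forall>x\<in>I. \<forall>y\<in>I. (\<forall>s\<in>S. x s = y s) \<longrightarrow> x = y)"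

lemma information_set_exists:
  fixes I :: "('g::finite \<Rightarrow> 'f::field) set"
  assumes zero: "0 \<in> I" and add: "\<And>x y. x \<in> I \<Longrightarrow> y \<in> I \<Longrightarrow> x + y \<in> I"
    and scale: "\<And>x s. x \<in> I \<Longrightarrow> (\<lambda>z. s * x z) \<in> I"
  shows "\<exists>S. information_set I S"
proof -
  define spanning where "spanning = (\<lambda>S. \<forall>f. \<exists>x\<in>I. \<forall>s\<in>S. x s = f s)"
  txt \<open>A spanning set of maximal cardinality is also injective.\<close>
  have "\<exists>S. spanning S \<and> card S = 0"
    using zero by (auto simp: spanning_def intro!: exI[of _ "{}"])
  moreover have "\<forall>c. (\<exists>S. spanning S \<and> card S = c) \<longrightarrow> c \<le> CARD('g)"
    using card_mono[OF finite_class.finite_UNIV] by auto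
  ultimately obtain c where "\<exists>S. spanning S \<and> card S = c"
    and cmax: "\<And>S. spanning S \<Longrightarrow> card S \<le> c"
    using Nat.ex_has_greatest_nat[of "\<lambda>c. \<exists>S. spanning S \<and> card S = c" 0 "CARD('g)"]
    by metis
  then obtain S where span: "spanning S" and cS: "card S = c" by blast
  have "x = y" if x: "x \<in> I" and y: "y \<in> I" and agree: "\<forall>s\<in>S. x s = y s" for x y
  proof (rule ccontr)
    assume "x \<noteq> y"
    then obtain s0 where s0: "x s0 \<noteq> y s0" by auto
    then have "s0 \<notin> S" using agree by auto
    define w where "w = (\<lambda>z. x z - y z)"
    have "x + (\<lambda>z. (- 1) * y z) \<in> I" by (rule add[OF x scale[OF y]])
    moreover have "x + (\<lambda>z. (- 1) * y z) = w" by (simp add: w_def fun_eq_iff)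
    ultimately have wI: "w \<in> I" by simp
    have w0: "w s0 \<noteq> 0" and wS: "\<forall>s\<in>S. w s = 0"
      using s0 agree by (simp_all add: w_def)
    have "spanning (insert s0 S)"
      unfolding spanning_def
    proof
      fix f :: "'g \<Rightarrow> 'f"
      obtain x' where x': "x' \<in> I" "\<forall>s\<in>S. x' s = f s" using span by (auto simp: spanning_def)
      define e where "e = (f s0 - x' s0) / w s0"
      have "x' + (\<lambda>z. e * w z) \<in> I" using add[OF x'(1) scale[OF wI]] .
      moreover have "\<forall>s\<in>insert s0 S. (x' + (\<lambda>z. e * w z)) s = f s"
        using x'(2) wS w0 by (auto simp: e_def)
      ultimately show "\<exists>x\<in>I. \<forall>s\<in>insert s0 S. x s = f s" by blast
    qed
    then have "card (insert s0 S) \<le> c" by (rule cmax)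
    then show False using \<open>s0 \<notin> S\<close> cS by simp
  qed
  then show ?thesis
    using span by (auto simp: information_set_def spanning_def)
qed

section \<open>Words with coordinates in a subset of \<open>FG\<close>\<close>

definition words_over :: "('g \<Rightarrow> 'f::zero) set \<Rightarrow> nat \<Rightarrow> (nat \<Rightarrow> 'g \<Rightarrow> 'f) set" where
  "words_over I n = {y. (\<forall>j<n. y j \<in> I) \<and> (\<forall>j\<ge>n. y j = 0)}"

lemma words_eq_words_over_UNIV: "words n = words_over UNIV n"
  by (auto simp: words_def words_over_def zero_fun_def)

lemma finite_words_over: "finite (words_over (I :: ('g::finite \<Rightarrow> 'f::{zero,finite}) set) n)"
proof (rule finite_subset)
  show "words_over I n \<subseteq> {y. \<forall>j. (j \<in> {..<n} \<longrightarrow> y j \<in> UNIV) \<and> (j \<notin> {..<n} \<longrightarrow> y j = 0)}"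
    by (auto simp: words_over_def)
qed (rule finite_set_of_finite_funs; simp)

lemma finite_words: "finite (words n :: (nat \<Rightarrow> 'g::finite \<Rightarrow> 'f::{zero,finite}) set)"
  unfolding words_eq_words_over_UNIV by (rule finite_words_over)

lemma card_words_over_ge:
  fixes I :: "('g::finite \<Rightarrow> 'f::{field,finite}) set"
  assumes "information_set I S"
  shows "real CARD('f) ^ (n * card S) \<le> card (words_over I n)"
proof -
  define T where "T = {..<n} \<times> S"
  define restr where "restr = (\<lambda>y::nat \<Rightarrow> 'g \<Rightarrow> 'f. restrict (\<lambda>t. y (fst t) (snd t)) T)"
  have "T \<rightarrow>\<^sub>E (UNIV::'f set) \<subseteq> restr ` words_over I n"
  proof
    fix w assume w: "w \<in> T \<rightarrow>\<^sub>E (UNIV::'f set)"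
    have "\<forall>j. \<exists>x\<in>I. \<forall>s\<in>S. x s = w (j, s)"
      using assms by (auto simp: information_set_def)
    then obtain x where x: "\<And>j. x j \<in> I" "\<And>j s. s \<in> S \<Longrightarrow> x j s = w (j, s)"
      by metis
    define y where "y = (\<lambda>j. if j < n then x j else 0)"
    have "y \<in> words_over I n" using x by (auto simp: y_def words_over_def)
    moreover have "restr y = w"
      using w x by (auto simp: restr_def y_def T_def fun_eq_iff PiE_def extensional_def)
    ultimately show "w \<in> restr ` words_over I n" by blast
  qed
  then have "card (T \<rightarrow>\<^sub>E (UNIV::'f set)) \<le> card (words_over I n)"
    by (rule surj_card_le[OF finite_words_over])
  moreover have "card (T \<rightarrow>\<^sub>E (UNIV::'f set)) = CARD('f) ^ (n * card S)"
    by (simp add: card_PiE T_def card_cartesian_product)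
  ultimately have "CARD('f) ^ (n * card S) \<le> card (words_over I n)" by simp
  then show ?thesis by (metis of_nat_le_iff of_nat_power)
qed

lemma hweight_eq_sum: "hweight n x = (\<Sum>j<n. \<Sum>z\<in>UNIV. if x j z \<noteq> 0 then 1 else 0)"
proof -
  have "hweight n x = card {t \<in> {..<n} \<times> UNIV. x (fst t) (snd t) \<noteq> 0}"
    unfolding hweight_def by (rule arg_cong[where f = card]) auto
  also have "\<dots> = (\<Sum>t\<in>{..<n} \<times> UNIV. if x (fst t) (snd t) \<noteq> 0 then 1 else 0)"
    by (simp add: sum.If_cases Int_def)
  finally show ?thesis by (simp add: sum.cartesian_product split_def)
qed

lemma hweight_le: "hweight n (x :: nat \<Rightarrow> 'g::finite \<Rightarrow> 'f::zero) \<le> n * CARD('g)"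
proof -
  have "hweight n x \<le> (\<Sum>j<n. \<Sum>z\<in>(UNIV::'g set). 1)"
    unfolding hweight_eq_sum by (intro sum_mono) auto
  then show ?thesis by simp
qed

lemma inj_on_translated_restriction:
  assumes info: "information_set I S"
    and transl: "\<And>x g. x \<in> I \<Longrightarrow> translate g x \<in> I"
  shows "inj_on (\<lambda>x. restrict (\<lambda>t. x (fst t) (g + snd t)) ({..<n} \<times> S)) (words_over I n)"
proof (rule inj_onI, rule ext)
  fix x y j
  assume x: "x \<in> words_over I n" and y: "y \<in> words_over I n"
    and eq: "restrict (\<lambda>t. x (fst t) (g + snd t)) ({..<n} \<times> S) =
             restrict (\<lambda>t. y (fst t) (g + snd t)) ({..<n} \<times> S)"
  show "x j = y j"
  proof (cases "j < n")
    case True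
    have "translate (- g) (x j) \<in> I" "translate (- g) (y j) \<in> I"
      using x y True transl by (auto simp: words_over_def)
    moreover have "\<forall>s\<in>S. translate (- g) (x j) s = translate (- g) (y j) s"
    proof
      fix s assume "s \<in> S"
      with fun_cong[OF eq, of "(j, s)"] True
      show "translate (- g) (x j) s = translate (- g) (y j) s"
        by (simp add: translate_def add.commute)
    qed
    ultimately have "translate (- g) (x j) = translate (- g) (y j)"
      using info by (auto simp: information_set_def)
    then show ?thesis by (simp add: translate_def fun_eq_iff) (metis diff_minus_eq_add add_diff_cancel)
  next
    case False
    then show ?thesis using x y by (auto simp: words_over_def)
  qed
qed

text \<open>Every coordinate \<open>(j, z)\<close> is counted once for each \<open>s \<in> S\<close>, via \<open>g = z - s\<close>.\<close>

lemma sum_translated_weights: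
  fixes x :: "nat \<Rightarrow> 'g::{finite,ab_group_add} \<Rightarrow> 'f::zero"
  shows "(\<Sum>g\<in>UNIV. card {t \<in> {..<n} \<times> S. x (fst t) (g + snd t) \<noteq> 0}) = card S * hweight n x"
proof -
  have "(\<Sum>g\<in>UNIV. card {t \<in> {..<n} \<times> S. x (fst t) (g + snd t) \<noteq> 0})
      = (\<Sum>g\<in>UNIV. \<Sum>t\<in>{..<n} \<times> S. if x (fst t) (g + snd t) \<noteq> 0 then 1 else 0)"
    by (simp add: sum.If_cases Int_def)
  also have "\<dots> = (\<Sum>t\<in>{..<n} \<times> S. \<Sum>g\<in>UNIV. if x (fst t) (g + snd t) \<noteq> 0 then 1 else 0)"
    by (rule sum.swap)
  also have "\<dots> = (\<Sum>t\<in>{..<n} \<times> S. \<Sum>z\<in>UNIV. if x (fst t) z \<noteq> 0 then 1 else 0)"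
    by (intro sum.cong refl sum.reindex_bij_witness[of _ "\<lambda>z. z - snd _" "\<lambda>g. g + snd _"]) auto
  also have "\<dots> = card S * hweight n x"
    by (simp add: sum.cartesian_product' hweight_eq_sum sum_distrib_left)
  finally show ?thesis .
qed

lemma exists_light_translate:
  fixes x :: "nat \<Rightarrow> 'g::{finite,ab_group_add} \<Rightarrow> 'f::zero" and \<delta> :: real
  assumes "real (hweight n x) \<le> \<delta> * CARD('g) * n"
  shows "\<exists>g. real (card {t \<in> {..<n} \<times> S. x (fst t) (g + snd t) \<noteq> 0}) \<le> \<delta> * (n * card S)"
proof (rule ccontr)
  assume "\<nexists>g. real (card {t \<in> {..<n} \<times> S. x (fst t) (g + snd t) \<noteq> 0}) \<le> \<delta> * (n * card S)"
  then have "(\<Sum>g\<in>(UNIV::'g set). \<delta> * (n * card S))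
      < (\<Sum>g\<in>UNIV. real (card {t \<in> {..<n} \<times> S. x (fst t) (g + snd t) \<noteq> 0}))"
    by (intro sum_strict_mono) (auto simp: not_le)
  also have "\<dots> = real (card S) * real (hweight n x)"
    using sum_translated_weights[where x = x] unfolding of_nat_sum[symmetric] by simp
  also have "\<dots> \<le> real (card S) * (\<delta> * CARD('g) * n)"
    using assms by (intro mult_left_mono) auto
  finally show False by (simp add: algebra_simps)
qed

text \<open>A word of \<open>I^n\<close> is determined by its restriction to the coordinates \<open>{..<n} \<times> (g + S)\<close>,
  which for the words counted here lies in a Hamming ball.\<close>

lemma card_light_on_translate_le:
  fixes I :: "('g::{finite,ab_group_add} \<Rightarrow> 'f::{field,finite}) set" and \<delta> :: real
  defines "q \<equiv> real CARD('f)"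
  assumes info: "information_set I S"
    and transl: "\<And>x g. x \<in> I \<Longrightarrow> translate g x \<in> I"
    and \<delta>: "0 < \<delta>" "\<delta> \<le> 1 - 1 / q"
  shows "card {x \<in> words_over I n.
            real (card {t \<in> {..<n} \<times> S. x (fst t) (g + snd t) \<noteq> 0}) \<le> \<delta> * (n * card S)}
           \<le> q powr (hq q \<delta> * (n * card S))"
proof -
  define T where "T = {..<n} \<times> S"
  have finT: "finite T" and cardT: "card T = n * card S"
    by (simp_all add: T_def card_cartesian_product)
  define restr where "restr = (\<lambda>x :: nat \<Rightarrow> 'g \<Rightarrow> 'f. restrict (\<lambda>t. x (fst t) (g + snd t)) T)"
  define ball where "ball = {w \<in> T \<rightarrow>\<^sub>E (UNIV::'f set). real (card {t\<in>T. w t \<noteq> 0}) \<le> \<delta> * card T}"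
  define light where "light = {x \<in> words_over I n.
    real (card {t \<in> T. x (fst t) (g + snd t) \<noteq> 0}) \<le> \<delta> * (n * card S)}"
  have "inj_on restr light"
    unfolding restr_def T_def
    by (rule inj_on_subset[OF inj_on_translated_restriction[OF info transl]])
      (auto simp: light_def T_def)
  then have "card light = card (restr ` light)"
    by (simp add: card_image)
  also have "\<dots> \<le> card ball"
  proof (rule card_mono)
    show "finite ball" by (simp add: ball_def finT finite_PiE)
    have "card {t \<in> T. restr x t \<noteq> 0} = card {t \<in> T. x (fst t) (g + snd t) \<noteq> 0}" for x
      unfolding restr_def by (rule arg_cong[where f = card]) auto
    then show "restr ` light \<subseteq> ball"
      by (auto simp: light_def ball_def restr_def cardT)
  qed
  finally have "real (card light) \<le> card ball" by simp
  also have "\<dots> \<le> q powr (hq q \<delta> * (n * card S))"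
    using card_hamming_ball_le[OF finT \<delta>[unfolded q_def]] by (simp add: ball_def cardT q_def)
  finally show ?thesis by (simp add: light_def T_def)
qed

lemma card_light_words_over_le:
  fixes I :: "('g::{finite,ab_group_add} \<Rightarrow> 'f::{field,finite}) set" and \<delta> :: real
  defines "q \<equiv> real CARD('f)"
  assumes info: "information_set I S"
    and transl: "\<And>x g. x \<in> I \<Longrightarrow> translate g x \<in> I"
    and \<delta>: "0 < \<delta>" "\<delta> \<le> 1 - 1 / q"
  shows "real (card {x \<in> words_over I n. real (hweight n x) \<le> \<delta> * CARD('g) * n})
           \<le> CARD('g) * q powr (hq q \<delta> * (n * card S))"
proof -
  define light_at where "light_at = (\<lambda>g. {x \<in> words_over I n.
    real (card {t \<in> {..<n} \<times> S. x (fst t) (g + snd t) \<noteq> 0}) \<le> \<delta> * (n * card S)})"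
  have "{x \<in> words_over I n. real (hweight n x) \<le> \<delta> * CARD('g) * n} \<subseteq> (\<Union>g. light_at g)"
    using exists_light_translate[where S = S] by (auto simp: light_at_def)
  moreover have "finite (\<Union>g. light_at g)"
    unfolding light_at_def by (rule finite_subset[OF _ finite_words_over[of I n]]) blast
  ultimately have "card {x \<in> words_over I n. real (hweight n x) \<le> \<delta> * CARD('g) * n}
      \<le> card (\<Union>g. light_at g)"
    by (intro card_mono)
  also have "\<dots> \<le> (\<Sum>g\<in>UNIV. card (light_at g))"
    by (rule card_UN_le) simp
  finally have "real (card {x \<in> words_over I n. real (hweight n x) \<le> \<delta> * CARD('g) * n})
      \<le> (\<Sum>g\<in>UNIV. real (card (light_at g)))"
    by (simp only: of_nat_sum[symmetric] of_nat_le_iff)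
  also have "\<dots> \<le> (\<Sum>g\<in>(UNIV::'g set). q powr (hq q \<delta> * (n * card S)))"
    unfolding light_at_def q_def
    by (rule sum_mono) (rule card_light_on_translate_le[OF info transl \<delta>[unfolded q_def]])
  finally show ?thesis by simp
qed

section \<open>Systematic quasi-\<open>FG\<close> codes\<close>

definition concat_word :: "nat \<Rightarrow> (nat \<Rightarrow> 'a) \<Rightarrow> (nat \<Rightarrow> 'a) \<Rightarrow> nat \<Rightarrow> 'a" where
  "concat_word k u y = (\<lambda>j. if j < k then u j else y (j - k))"

text \<open>\<open>k \<times> N\<close> matrices \<open>A i j\<close> over \<open>FG\<close>; the encoder sends \<open>u \<in> (FG)^k\<close> to \<open>(u, u A)\<close>,
  so the code is generated by the rows of \<open>[I | A]\<close>.\<close>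

definition generator_matrices :: "nat \<Rightarrow> nat \<Rightarrow> (nat \<Rightarrow> nat \<Rightarrow> 'g \<Rightarrow> 'f::zero) set" where
  "generator_matrices k N = {A. \<forall>i. (i < k \<longrightarrow> A i \<in> words N) \<and> (k \<le> i \<longrightarrow> A i = 0)}"

definition parity_word ::
    "nat \<Rightarrow> nat \<Rightarrow> (nat \<Rightarrow> 'g::{ab_group_add,finite} \<Rightarrow> 'f::field) \<Rightarrow> (nat \<Rightarrow> nat \<Rightarrow> 'g \<Rightarrow> 'f)
      \<Rightarrow> nat \<Rightarrow> 'g \<Rightarrow> 'f" where
  "parity_word k N u A = (\<lambda>j. if j < N then (\<Sum>i<k. ga_mult (u i) (A i j)) else 0)"

definition encode ::
    "nat \<Rightarrow> nat \<Rightarrow> (nat \<Rightarrow> nat \<Rightarrow> 'g::{ab_group_add,finite} \<Rightarrow> 'f::field) \<Rightarrow> (nat \<Rightarrow> 'g \<Rightarrow> 'f)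
      \<Rightarrow> nat \<Rightarrow> 'g \<Rightarrow> 'f" where
  "encode k N A u = concat_word k u (parity_word k N u A)"

definition systematic_code ::
    "nat \<Rightarrow> nat \<Rightarrow> (nat \<Rightarrow> nat \<Rightarrow> 'g::{ab_group_add,finite} \<Rightarrow> 'f::field) \<Rightarrow> (nat \<Rightarrow> 'g \<Rightarrow> 'f) set" where
  "systematic_code k N A = encode k N A ` words k"

lemma finite_generator_matrices:
  "finite (generator_matrices k N :: (nat \<Rightarrow> nat \<Rightarrow> 'g::finite \<Rightarrow> 'f::{zero,finite}) set)"
proof -
  have "generator_matrices k N =
        {A. \<forall>i. (i \<in> {..<k} \<longrightarrow> A i \<in> (words N :: (nat \<Rightarrow> 'g \<Rightarrow> 'f) set)) \<and> (i \<notin> {..<k} \<longrightarrow> A i = 0)}"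
    by (auto simp: generator_matrices_def not_less)
  then show ?thesis
    using finite_set_of_finite_funs[OF finite_lessThan finite_words] by simp
qed

lemma encode_less: "j < k \<Longrightarrow> encode k N A u j = u j"
  by (simp add: encode_def concat_word_def)

lemma encode_in_words: "u \<in> words k \<Longrightarrow> encode k N A u \<in> words (k + N)"
  by (auto simp: words_def encode_def concat_word_def parity_word_def)

lemma encode_zero [simp]: "encode k N A 0 = 0"
  by (auto simp: encode_def concat_word_def parity_word_def fun_eq_iff)

lemma encode_add: "encode k N A (u + v) = encode k N A u + encode k N A v"
proof -
  have "parity_word k N (u + v) A = parity_word k N u A + parity_word k N v A"
    by (simp add: parity_word_def fun_eq_iff ga_mult_add_left sum.distrib)
  then show ?thesis
    by (simp add: encode_def concat_word_def fun_eq_iff)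
qed

lemma encode_scale: "encode k N A (word_scale s u) = word_scale s (encode k N A u)"
  by (auto simp: encode_def concat_word_def parity_word_def fun_eq_iff word_scale_def
      ga_mult_scale_left sum_fun_apply sum_distrib_left)

lemma encode_sum: "encode k N A (\<Sum>p\<in>P. f p) = (\<Sum>p\<in>P. encode k N A (f p))"
proof (induction P rule: infinite_finite_induct)
  case (insert x F)
  then show ?case by (simp only: sum.insert[OF insert(1,2)] encode_add)
next
  case (infinite P)
  then show ?case by (simp only: sum.infinite[OF infinite] encode_zero)
qed (simp only: sum.empty encode_zero)

lemma encode_ga_mult: "(\<lambda>j. ga_mult a (encode k N A u j)) = encode k N A (\<lambda>j. ga_mult a (u j))"
  by (auto simp: encode_def concat_word_def parity_word_def fun_eq_iff ga_mult_sum_right ga_mult_assoc)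

lemma quasi_FG_code_systematic_code: "quasi_FG_code (k + N) (systematic_code k N A)"
  unfolding quasi_FG_code_def
proof (intro conjI ballI allI)
  show "systematic_code k N A \<subseteq> words (k + N)"
    by (auto simp: systematic_code_def encode_in_words)
  have "(\<lambda>_ _. 0) \<in> words k" by (simp add: words_def)
  then have "encode k N A (\<lambda>_ _. 0) \<in> systematic_code k N A"
    unfolding systematic_code_def by (rule imageI)
  moreover have "encode k N A (\<lambda>_ _. 0) = (\<lambda>_ _. 0)"
    by (simp add: encode_def concat_word_def parity_word_def fun_eq_iff)
  ultimately show "(\<lambda>_ _. 0) \<in> systematic_code k N A" by simp
next
  fix c d assume "c \<in> systematic_code k N A" "d \<in> systematic_code k N A"
  then obtain u v where u: "u \<in> words k" "c = encode k N A u" and v: "v \<in> words k" "d = encode k N A v"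
    by (auto simp: systematic_code_def)
  have "u + v \<in> words k" using u v by (auto simp: words_def)
  then have "encode k N A (u + v) \<in> systematic_code k N A"
    unfolding systematic_code_def by (rule imageI)
  moreover have "encode k N A (u + v) = (\<lambda>j z. c j z + d j z)"
    by (simp add: encode_add u v fun_eq_iff)
  ultimately show "(\<lambda>j z. c j z + d j z) \<in> systematic_code k N A" by simp
next
  fix a c assume "c \<in> systematic_code k N A"
  then obtain u where u: "u \<in> words k" "c = encode k N A u" by (auto simp: systematic_code_def)
  then have "(\<lambda>j. ga_mult a (u j)) \<in> words k" by (auto simp: words_def)
  then have "encode k N A (\<lambda>j. ga_mult a (u j)) \<in> systematic_code k N A"
    unfolding systematic_code_def by (rule imageI)
  then show "(\<lambda>j. ga_mult a (c j)) \<in> systematic_code k N A"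
    by (simp add: u encode_ga_mult)
qed

global_interpretation word_space: vector_space "word_scale :: 'f::field \<Rightarrow> (nat \<Rightarrow> 'g \<Rightarrow> 'f) \<Rightarrow> _"
  by unfold_locales (auto simp: word_scale_def fun_eq_iff algebra_simps)

definition unit_word :: "nat \<Rightarrow> 'g \<Rightarrow> nat \<Rightarrow> 'g \<Rightarrow> 'f::field" where
  "unit_word i z = (\<lambda>j w. if j = i \<and> w = z then 1 else 0)"

lemma words_eq_sum_unit_words:
  assumes "u \<in> words k"
  shows "u = (\<Sum>p\<in>{..<k} \<times> (UNIV::'g::finite set). word_scale (u (fst p) (snd p)) (unit_word (fst p) (snd p)))"
proof (rule ext, rule ext)
  fix j w
  have "(\<Sum>p\<in>{..<k} \<times> (UNIV::'g set). word_scale (u (fst p) (snd p)) (unit_word (fst p) (snd p))) j w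
      = (\<Sum>p\<in>{..<k} \<times> (UNIV::'g set). if p = (j, w) then u j w else 0)"
    unfolding sum_fun_apply word_scale_def by (rule sum.cong) (auto simp: unit_word_def)
  also have "\<dots> = (if j < k then u j w else 0)"
    by (subst sum.delta) auto
  also have "\<dots> = u j w"
    using assms by (auto simp: words_def)
  finally show "u j w = (\<Sum>p\<in>{..<k} \<times> (UNIV::'g set).
      word_scale (u (fst p) (snd p)) (unit_word (fst p) (snd p))) j w" ..
qed

lemma kronecker_words_independent:
  fixes b :: "nat \<times> 'g \<Rightarrow> nat \<Rightarrow> 'g \<Rightarrow> 'f::field"
  assumes P: "finite P"
    and kron: "\<And>p p'. p \<in> P \<Longrightarrow> p' \<in> P \<Longrightarrow> b p (fst p') (snd p') = (if p = p' then 1 else 0)"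
  shows "inj_on b P" and "\<not> word_space.dependent (b ` P)"
proof -
  show inj_b: "inj_on b P"
  proof (rule inj_onI)
    fix p p' assume "p \<in> P" "p' \<in> P" "b p = b p'"
    then have "b p (fst p') (snd p') = 1" using kron[of p' p'] by simp
    with \<open>p \<in> P\<close> \<open>p' \<in> P\<close> show "p = p'" using kron[of p p'] by (simp split: if_splits)
  qed
  show "\<not> word_space.dependent (b ` P)"
  proof
    assume "word_space.dependent (b ` P)"
    then obtain cf where cf: "\<exists>v\<in>b ` P. cf v \<noteq> 0" "(\<Sum>v\<in>b ` P. word_scale (cf v) v) = 0"
      using word_space.dependent_finite[of "b ` P"] P by auto
    then obtain p0 where p0: "p0 \<in> P" "cf (b p0) \<noteq> 0" by auto
    have "0 = (\<Sum>v\<in>b ` P. word_scale (cf v) v) (fst p0) (snd p0)" using cf(2) by simp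
    also have "\<dots> = (\<Sum>p\<in>P. cf (b p) * b p (fst p0) (snd p0))"
      by (simp add: sum_fun_apply word_scale_def sum.reindex[OF inj_b])
    also have "\<dots> = (\<Sum>p\<in>P. if p = p0 then cf (b p0) else 0)"
      using p0(1) by (intro sum.cong refl) (simp add: kron)
    also have "\<dots> = cf (b p0)" using p0 P by simp
    finally show False using p0 by simp
  qed
qed

text \<open>The encodings of the unit words form a basis: they span the code, and they are
  independent because encoding does not change the first \<open>k\<close> coordinates.\<close>

lemma dimF_systematic_code:
  fixes A :: "nat \<Rightarrow> nat \<Rightarrow> 'g::{ab_group_add,finite} \<Rightarrow> 'f::field"
  shows "dimF (systematic_code k N A) = CARD('g) * k"
proof -
  define P where "P = {..<k} \<times> (UNIV::'g set)"
  define b where "b = (\<lambda>p. encode k N A (unit_word (fst p) (snd p)))"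
  have "b p (fst p') (snd p') = (if p = p' then 1 else 0)" if "p' \<in> P" for p p'
    using that by (auto simp: b_def P_def encode_less unit_word_def prod_eq_iff)
  then have inj_b: "inj_on b P" and indep: "\<not> word_space.dependent (b ` P)"
    using kronecker_words_independent[of P b] by (simp_all add: P_def)
  have "b ` P \<subseteq> systematic_code k N A"
    by (auto simp: b_def P_def systematic_code_def unit_word_def words_def)
  moreover have "systematic_code k N A \<subseteq> word_space.span (b ` P)"
  proof
    fix c assume "c \<in> systematic_code k N A"
    then obtain u where u: "u \<in> words k" "c = encode k N A u" by (auto simp: systematic_code_def)
    have "c = encode k N A (\<Sum>p\<in>P. word_scale (u (fst p) (snd p)) (unit_word (fst p) (snd p)))"
      by (simp only: P_def u(2) flip: words_eq_sum_unit_words[OF u(1)])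
    also have "\<dots> = (\<Sum>p\<in>P. word_scale (u (fst p) (snd p)) (b p))"
      by (simp add: b_def encode_sum encode_scale)
    also have "\<dots> \<in> word_space.span (b ` P)"
      by (intro word_space.span_sum word_space.span_scale word_space.span_base) auto
    finally show "c \<in> word_space.span (b ` P)" .
  qed
  moreover have "card (b ` P) = CARD('g) * k"
    using card_image[OF inj_b] by (simp add: P_def card_cartesian_product)
  ultimately show ?thesis
    unfolding dimF_def using indep by (intro word_space.dim_unique)
qed

section \<open>Counting generator matrices with a light codeword\<close>

definition ideal_gen :: "nat \<Rightarrow> (nat \<Rightarrow> 'g::{ab_group_add,finite} \<Rightarrow> 'f::field) \<Rightarrow> ('g \<Rightarrow> 'f) set" where
  "ideal_gen k u = {(\<Sum>i<k. ga_mult (u i) (a i)) | a. True}"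

lemma ideal_genI: "x = (\<Sum>i<k. ga_mult (u i) (a i)) \<Longrightarrow> x \<in> ideal_gen k u"
  unfolding ideal_gen_def by blast

lemma ideal_genE:
  assumes "x \<in> ideal_gen k u"
  obtains a where "x = (\<Sum>i<k. ga_mult (u i) (a i))"
  using assms unfolding ideal_gen_def by blast

lemma generator_in_ideal_gen: "i < k \<Longrightarrow> u i \<in> ideal_gen k u"
  by (rule ideal_genI[where a = "\<lambda>i'. if i' = i then ga_one else 0"]) (simp add: if_distrib cong: if_cong)

lemma translate_in_ideal_gen: "x \<in> ideal_gen k u \<Longrightarrow> translate g x \<in> ideal_gen k u"
  by (erule ideal_genE) (simp add: translate_sum translate_ga_mult ideal_genI)

lemma information_set_ideal_gen_exists: "\<exists>S. information_set (ideal_gen k u) S"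
proof (rule information_set_exists)
  show "0 \<in> ideal_gen k u"
    by (rule ideal_genI[where a = "\<lambda>_. 0"]) simp
  show "x + y \<in> ideal_gen k u" if "x \<in> ideal_gen k u" "y \<in> ideal_gen k u" for x y
  proof -
    from that obtain a b where "x = (\<Sum>i<k. ga_mult (u i) (a i))" "y = (\<Sum>i<k. ga_mult (u i) (b i))"
      by (auto elim!: ideal_genE)
    then show ?thesis
      by (intro ideal_genI[where a = "a + b"]) (simp add: ga_mult_add_right sum.distrib)
  qed
  show "(\<lambda>z. s * x z) \<in> ideal_gen k u" if "x \<in> ideal_gen k u" for x s
  proof -
    from that obtain a where "x = (\<Sum>i<k. ga_mult (u i) (a i))"
      by (auto elim!: ideal_genE)
    then show ?thesis
      by (intro ideal_genI[where a = "\<lambda>i z. s * a i z"])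
        (simp add: ga_mult_scale_right fun_eq_iff sum_fun_apply sum_distrib_left)
  qed
qed

lemma words_in_words_over_ideal_gen: "u \<in> words k \<Longrightarrow> u \<in> words_over (ideal_gen k u) k"
  by (auto simp: words_over_def words_def generator_in_ideal_gen zero_fun_def)

lemma information_set_ideal_gen_nonempty:
  assumes "u \<in> words k" "u \<noteq> 0" "information_set (ideal_gen k u) S"
  shows "S \<noteq> {}"
proof
  assume "S = {}"
  obtain i where i: "i < k" "u i \<noteq> 0"
    using assms(1,2) by (auto simp: words_def fun_eq_iff zero_fun_def) (metis not_le)
  have "0 \<in> ideal_gen k u"
    by (rule ideal_genI[where a = "\<lambda>_. 0"]) simp
  moreover have "\<forall>x\<in>ideal_gen k u. \<forall>y\<in>ideal_gen k u. x = y"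
    using assms(3) \<open>S = {}\<close> by (simp add: information_set_def)
  ultimately have "u i = 0" using generator_in_ideal_gen[OF i(1)] by blast
  with i show False by simp
qed

lemma parity_word_image:
  "parity_word k N u ` generator_matrices k N = words_over (ideal_gen k u) N"
proof
  show "parity_word k N u ` generator_matrices k N \<subseteq> words_over (ideal_gen k u) N"
    by (auto simp: parity_word_def words_over_def intro: ideal_genI)
next
  show "words_over (ideal_gen k u) N \<subseteq> parity_word k N u ` generator_matrices k N"
  proof
    fix y assume y: "y \<in> words_over (ideal_gen k u) N"
    have "\<exists>a. j < N \<longrightarrow> y j = (\<Sum>i<k. ga_mult (u i) (a i))" for j
    proof (cases "j < N")
      case True
      with y have "y j \<in> ideal_gen k u" by (simp add: words_over_def)
      then show ?thesis by (auto elim: ideal_genE)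
    qed simp
    then obtain a where a: "\<And>j. j < N \<Longrightarrow> y j = (\<Sum>i<k. ga_mult (u i) (a j i))"
      using choice[of "\<lambda>j a. j < N \<longrightarrow> y j = (\<Sum>i<k. ga_mult (u i) (a i))"] by blast
    define A where "A = (\<lambda>i j. if i < k \<and> j < N then a j i else 0)"
    have "A \<in> generator_matrices k N"
      by (auto simp: A_def generator_matrices_def words_def)
    moreover have "parity_word k N u A = y"
      using y a by (auto simp: parity_word_def A_def words_over_def fun_eq_iff)
    ultimately show "y \<in> parity_word k N u ` generator_matrices k N" by blast
  qed
qed

text \<open>All fibres of a homomorphism have the size of its kernel.\<close>

lemma card_preimage_mult_card_image:
  fixes \<phi> :: "'a::ab_group_add \<Rightarrow> 'b::ab_group_add"
  assumes X: "finite X" "0 \<in> X" "\<And>a b. a \<in> X \<Longrightarrow> b \<in> X \<Longrightarrow> a - b \<in> X"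
    and hom: "\<And>a b. a \<in> X \<Longrightarrow> b \<in> X \<Longrightarrow> \<phi> (a - b) = \<phi> a - \<phi> b"
  shows "card {x\<in>X. P (\<phi> x)} * card (\<phi> ` X) = card X * card {y \<in> \<phi> ` X. P y}"
proof -
  have X_add: "a + b \<in> X" if "a \<in> X" "b \<in> X" for a b
    using X(3)[OF that(1) X(3)[OF X(2) that(2)]] by simp
  define c where "c = card {x\<in>X. \<phi> x = 0}"
  have fibre: "card {x\<in>X. \<phi> x = y} = c" if y: "y \<in> \<phi> ` X" for y
  proof -
    obtain x0 where x0: "x0 \<in> X" "y = \<phi> x0" using y by blast
    have "bij_betw (\<lambda>x. x - x0) {x\<in>X. \<phi> x = y} {x\<in>X. \<phi> x = 0}"
    proof (rule bij_betw_byWitness[where f' = "\<lambda>x. x + x0"])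
      show "(\<lambda>x. x - x0) ` {x \<in> X. \<phi> x = y} \<subseteq> {x \<in> X. \<phi> x = 0}"
        using X(3) hom x0 by auto
      show "(\<lambda>x. x + x0) ` {x \<in> X. \<phi> x = 0} \<subseteq> {x \<in> X. \<phi> x = y}"
        using X_add hom[of _ x0] x0 by force
    qed auto
    then show ?thesis unfolding c_def by (rule bij_betw_same_card)
  qed
  have count: "card {x\<in>X. Q (\<phi> x)} = c * card {y \<in> \<phi> ` X. Q y}" for Q
  proof -
    have "card {x\<in>X. Q (\<phi> x)} = (\<Sum>x\<in>{x\<in>X. Q (\<phi> x)}. 1)" by simp
    also have "\<dots> = (\<Sum>y\<in>\<phi> ` {x\<in>X. Q (\<phi> x)}. \<Sum>x\<in>{x' \<in> {x\<in>X. Q (\<phi> x)}. \<phi> x' = y}. 1)"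
      by (rule sum.image_gen) (use X(1) in simp)
    also have "\<dots> = (\<Sum>y\<in>{y \<in> \<phi> ` X. Q y}. c)"
    proof (rule sum.cong)
      fix y assume y: "y \<in> {y \<in> \<phi> ` X. Q y}"
      then have "{x' \<in> {x\<in>X. Q (\<phi> x)}. \<phi> x' = y} = {x\<in>X. \<phi> x = y}" by auto
      then show "(\<Sum>x\<in>{x' \<in> {x\<in>X. Q (\<phi> x)}. \<phi> x' = y}. 1) = c"
        using fibre y by simp
    qed auto
    finally show ?thesis by simp
  qed
  show ?thesis
    using count[of P] count[of "\<lambda>_. True"] by simp
qed

lemma sum_card_concat_word_le:
  fixes I :: "('g::finite \<Rightarrow> 'f::{zero,finite}) set"
  assumes U: "U \<subseteq> words_over I k"
  shows "(\<Sum>u\<in>U. card {y \<in> words_over I N. P (concat_word k u y)})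
           \<le> card {x \<in> words_over I (k + N). P x}"
proof -
  define Sg where "Sg = Sigma U (\<lambda>u. {y \<in> words_over I N. P (concat_word k u y)})"
  have "finite U" using U finite_words_over finite_subset by blast
  then have "(\<Sum>u\<in>U. card {y \<in> words_over I N. P (concat_word k u y)}) = card Sg"
    unfolding Sg_def by (intro card_SigmaI[symmetric]) (auto intro: finite_subset[OF _ finite_words_over])
  also have "\<dots> = card ((\<lambda>p. concat_word k (fst p) (snd p)) ` Sg)"
  proof (rule card_image[symmetric], rule inj_onI)
    fix p p' assume "p \<in> Sg" "p' \<in> Sg" and eq: "concat_word k (fst p) (snd p) = concat_word k (fst p') (snd p')"
    then have "fst p \<in> words_over I k" "fst p' \<in> words_over I k" using U by (auto simp: Sg_def)
    then have "fst p j = fst p' j" for j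
      using fun_cong[OF eq, of j] by (cases "j < k") (auto simp: concat_word_def words_over_def)
    moreover have "snd p j = snd p' j" for j
      using fun_cong[OF eq, of "j + k"] by (simp add: concat_word_def)
    ultimately show "p = p'" by (simp add: prod_eq_iff fun_eq_iff)
  qed
  also have "\<dots> \<le> card {x \<in> words_over I (k + N). P x}"
  proof (rule card_mono)
    show "finite {x \<in> words_over I (k + N). P x}"
      by (rule finite_subset[OF _ finite_words_over[of I "k + N"]]) blast
    have "concat_word k u y \<in> words_over I (k + N)" if "u \<in> U" "y \<in> words_over I N" for u y
      using that U by (auto simp: words_over_def concat_word_def)
    then show "(\<lambda>p. concat_word k (fst p) (snd p)) ` Sg \<subseteq> {x \<in> words_over I (k + N). P x}"
      by (auto simp: Sg_def)
  qed
  finally show ?thesis .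
qed

lemma card_encode_preimage_eq:
  fixes u :: "nat \<Rightarrow> 'g::{ab_group_add,finite} \<Rightarrow> 'f::{field,finite}"
  shows "card {A \<in> generator_matrices k N. P (encode k N A u)} * card (words_over (ideal_gen k u) N)
       = card (generator_matrices k N :: (nat \<Rightarrow> nat \<Rightarrow> 'g \<Rightarrow> 'f) set)
           * card {y \<in> words_over (ideal_gen k u) N. P (concat_word k u y)}"
proof -
  define M where "M = (generator_matrices k N :: (nat \<Rightarrow> nat \<Rightarrow> 'g \<Rightarrow> 'f) set)"
  have "card {A \<in> M. P (concat_word k u (parity_word k N u A))} * card (parity_word k N u ` M)
      = card M * card {y \<in> parity_word k N u ` M. P (concat_word k u y)}"
  proof (rule card_preimage_mult_card_image)
    show "finite M" by (simp add: M_def finite_generator_matrices)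
    show "0 \<in> M" by (simp add: M_def generator_matrices_def words_def zero_fun_def)
    show "A - B \<in> M" if "A \<in> M" "B \<in> M" for A B
      using that by (auto simp: M_def generator_matrices_def words_def)
    show "parity_word k N u (A - B) = parity_word k N u A - parity_word k N u B" for A B
      by (simp add: parity_word_def fun_eq_iff ga_mult_diff_right sum_subtractf)
  qed
  then show ?thesis
    by (simp add: M_def parity_word_image encode_def)
qed

lemma sum_card_light_concat_word_le:
  fixes u0 :: "nat \<Rightarrow> 'g::{ab_group_add,finite} \<Rightarrow> 'f::{field,finite}" and \<delta> :: real
  defines "q \<equiv> real CARD('f)"
  assumes S: "information_set (ideal_gen k u0) S" and \<delta>: "0 < \<delta>" "\<delta> \<le> 1 - 1 / q"
    and U: "U \<subseteq> words k" "\<And>u. u \<in> U \<Longrightarrow> ideal_gen k u = ideal_gen k u0"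
  shows "real (\<Sum>u\<in>U. card {y \<in> words_over (ideal_gen k u0) N.
                  real (hweight (k + N) (concat_word k u y)) \<le> \<delta> * CARD('g) * real (k + N)})
           \<le> CARD('g) * q powr (hq q \<delta> * ((k + N) * card S))"
proof -
  have "U \<subseteq> words_over (ideal_gen k u0) k"
    using U words_in_words_over_ideal_gen by fastforce
  then have "(\<Sum>u\<in>U. card {y \<in> words_over (ideal_gen k u0) N.
                  real (hweight (k + N) (concat_word k u y)) \<le> \<delta> * CARD('g) * real (k + N)})
      \<le> card {x \<in> words_over (ideal_gen k u0) (k + N). real (hweight (k + N) x) \<le> \<delta> * CARD('g) * real (k + N)}"
    by (rule sum_card_concat_word_le)
  then have "real (\<Sum>u\<in>U. card {y \<in> words_over (ideal_gen k u0) N.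
                  real (hweight (k + N) (concat_word k u y)) \<le> \<delta> * CARD('g) * real (k + N)})
      \<le> card {x \<in> words_over (ideal_gen k u0) (k + N). real (hweight (k + N) x) \<le> \<delta> * CARD('g) * real (k + N)}"
    by (simp only: of_nat_le_iff)
  also have "\<dots> \<le> CARD('g) * q powr (hq q \<delta> * ((k + N) * card S))"
    using card_light_words_over_le[OF S translate_in_ideal_gen \<delta>[unfolded q_def], of "k + N"]
    by (simp add: q_def)
  finally show ?thesis .
qed

text \<open>All messages in \<open>U\<close> generate the same ideal \<open>J\<close>, with information set \<open>S\<close>. The
  redundancy \<open>N\<close> enters through \<open>card (J^N) \<ge> q ^ (N * card S)\<close>.\<close>

lemma sum_card_light_encodings_le:
  fixes u0 :: "nat \<Rightarrow> 'g::{ab_group_add,finite} \<Rightarrow> 'f::{field,finite}"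
    and \<delta> :: real and k N :: nat
  defines "q \<equiv> real CARD('f)"
  defines "X \<equiv> q powr (real N - hq q \<delta> * (k + N))"
  assumes \<delta>: "0 < \<delta>" "\<delta> \<le> 1 - 1 / q" and X: "1 \<le> X"
    and u0: "u0 \<in> words k" "u0 \<noteq> 0"
    and U: "U \<subseteq> words k" "\<And>u. u \<in> U \<Longrightarrow> ideal_gen k u = ideal_gen k u0"
  shows "(\<Sum>u\<in>U. real (card {A \<in> generator_matrices k N.
              real (hweight (k + N) (encode k N A u)) \<le> \<delta> * CARD('g) * real (k + N)})) * X
         \<le> real (card (generator_matrices k N :: (nat \<Rightarrow> nat \<Rightarrow> 'g \<Rightarrow> 'f) set)) * CARD('g)"
proof -
  define M where "M = (generator_matrices k N :: (nat \<Rightarrow> nat \<Rightarrow> 'g \<Rightarrow> 'f) set)"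
  define W where "W = words_over (ideal_gen k u0) N"
  define light where "light = (\<lambda>x::nat \<Rightarrow> 'g \<Rightarrow> 'f. real (hweight (k + N) x) \<le> \<delta> * CARD('g) * real (k + N))"
  define bad where "bad = (\<lambda>u. card {A \<in> M. light (encode k N A u)})"
  obtain S where S: "information_set (ideal_gen k u0) S"
    using information_set_ideal_gen_exists by blast
  define t where "t = card S"
  have "t \<ge> 1"
    using information_set_ideal_gen_nonempty[OF u0 S] by (simp add: t_def Suc_le_eq card_gt_0_iff)
  have q1: "q > 1" using card_field_ge2[where 'f = 'f] by (simp add: q_def)
  have "bad u * card W = card M * card {y \<in> W. light (concat_word k u y)}" if "u \<in> U" for u
    using card_encode_preimage_eq[where P = light and u = u and k = k and N = N] U(2)[OF that]
    by (simp add: bad_def M_def W_def)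
  then have "(\<Sum>u\<in>U. bad u * card W) = card M * (\<Sum>u\<in>U. card {y \<in> W. light (concat_word k u y)})"
    by (simp add: sum_distrib_left)
  then have fibre_sum: "(\<Sum>u\<in>U. real (bad u)) * card W
      = card M * real (\<Sum>u\<in>U. card {y \<in> W. light (concat_word k u y)})"
    by (simp only: sum_distrib_right of_nat_sum[symmetric] of_nat_mult[symmetric] of_nat_eq_iff)
  define P where "P = q powr (hq q \<delta> * ((k + N) * t))"
  have "P > 0" using q1 by (simp add: P_def)
  have "X powr t * P = q powr (real N * t)"
    unfolding X_def P_def powr_powr by (simp add: powr_add[symmetric] algebra_simps)
  then have "(\<Sum>u\<in>U. real (bad u)) * X powr t * P = (\<Sum>u\<in>U. real (bad u)) * q powr (real N * t)"
    by (simp add: mult.assoc)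
  also have "\<dots> \<le> (\<Sum>u\<in>U. real (bad u)) * card W"
    using card_words_over_ge[OF S, of N] q1
    by (intro mult_left_mono sum_nonneg) (simp_all add: W_def q_def t_def powr_realpow flip: of_nat_mult)
  also have "\<dots> \<le> real (card M) * (CARD('g) * P)"
    unfolding fibre_sum unfolding P_def light_def W_def t_def q_def
    by (intro mult_left_mono sum_card_light_concat_word_le[OF S \<delta>[unfolded q_def] U]) simp_all
  finally have "(\<Sum>u\<in>U. real (bad u)) * X powr t \<le> real (card M) * CARD('g)"
    using \<open>P > 0\<close> by (simp add: mult.assoc)
  moreover have "(\<Sum>u\<in>U. real (bad u)) * X \<le> (\<Sum>u\<in>U. real (bad u)) * X powr t"
    using X \<open>t \<ge> 1\<close> powr_mono[of 1 t X] by (intro mult_left_mono sum_nonneg) simp_all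
  ultimately show ?thesis
    unfolding bad_def light_def M_def by linarith
qed

lemma sum_le_card_image_mult:
  fixes f :: "'a \<Rightarrow> real" and B :: real
  assumes "finite U" and "\<And>y. y \<in> \<phi> ` U \<Longrightarrow> (\<Sum>u\<in>{u\<in>U. \<phi> u = y}. f u) \<le> B"
  shows "(\<Sum>u\<in>U. f u) \<le> card (\<phi> ` U) * B"
proof -
  have "(\<Sum>u\<in>U. f u) = (\<Sum>y\<in>\<phi> ` U. \<Sum>u\<in>{u\<in>U. \<phi> u = y}. f u)"
    by (rule sum.image_gen[OF assms(1)])
  also have "\<dots> \<le> (\<Sum>y\<in>\<phi> ` U. B)"
    by (rule sum_mono) (rule assms(2))
  finally show ?thesis by simp
qed

text \<open>Summing the previous bound over the (at most \<open>card (Pow UNIV)\<close>) ideals of \<open>FG\<close>.\<close>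

lemma sum_card_light_encodings_less:
  fixes \<delta> :: real and k N :: nat
  defines "q \<equiv> real CARD('f::{field,finite})"
  defines "X \<equiv> q powr (real N - hq q \<delta> * (k + N))"
  assumes \<delta>: "0 < \<delta>" "\<delta> \<le> 1 - 1 / q"
    and large: "real (card (Pow (UNIV :: ('g::{ab_group_add,finite} \<Rightarrow> 'f) set))) * CARD('g) < X"
  shows "(\<Sum>u\<in>words k - {0 :: nat \<Rightarrow> 'g \<Rightarrow> 'f}. card {A \<in> generator_matrices k N.
            real (hweight (k + N) (encode k N A u)) \<le> \<delta> * CARD('g) * real (k + N)})
         < card (generator_matrices k N :: (nat \<Rightarrow> nat \<Rightarrow> 'g \<Rightarrow> 'f) set)"
proof -
  define M where "M = (generator_matrices k N :: (nat \<Rightarrow> nat \<Rightarrow> 'g \<Rightarrow> 'f) set)"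
  define U where "U = words k - {0 :: nat \<Rightarrow> 'g \<Rightarrow> 'f}"
  define bad where "bad = (\<lambda>u. card {A \<in> M. real (hweight (k + N) (encode k N A u)) \<le> \<delta> * CARD('g) * real (k + N)})"
  define K where "K = real (card (Pow (UNIV :: ('g \<Rightarrow> 'f) set)))"
  have "1 \<le> K" by (simp add: K_def Suc_le_eq card_gt_0_iff)
  moreover have "1 \<le> real CARD('g)" by (simp add: Suc_le_eq)
  ultimately have "1 \<le> K * CARD('g)" using mult_mono[of 1 K 1 "real CARD('g)"] by simp
  then have "1 \<le> X" using large by (simp add: K_def)
  have "card M > 0"
    unfolding M_def using finite_generator_matrices
    by (auto simp: card_gt_0_iff generator_matrices_def words_def zero_fun_def intro!: exI[of _ 0])
  have "(\<Sum>u\<in>U. real (bad u) * X) \<le> card (ideal_gen k ` U) * (real (card M) * CARD('g))"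
  proof (rule sum_le_card_image_mult)
    show "finite U" using finite_words unfolding U_def by blast
    fix J assume "J \<in> ideal_gen k ` U"
    then obtain u0 where u0: "u0 \<in> U" "J = ideal_gen k u0" by blast
    show "(\<Sum>u\<in>{u\<in>U. ideal_gen k u = J}. real (bad u) * X) \<le> real (card M) * CARD('g)"
      unfolding bad_def M_def X_def q_def sum_distrib_right[symmetric]
    proof (rule sum_card_light_encodings_le[OF \<delta>[unfolded q_def] \<open>1 \<le> X\<close>[unfolded X_def q_def]])
      show "u0 \<in> words k" "u0 \<noteq> 0" "{u \<in> U. ideal_gen k u = J} \<subseteq> words k"
        using u0 by (auto simp: U_def)
    qed (use u0 in auto)
  qed
  also have "\<dots> \<le> K * (real (card M) * CARD('g))"
  proof (rule mult_right_mono)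
    have "card (ideal_gen k ` U) \<le> card (Pow (UNIV :: ('g \<Rightarrow> 'f) set))"
      by (rule card_mono) auto
    then show "real (card (ideal_gen k ` U)) \<le> K" by (simp add: K_def)
  qed simp
  also have "\<dots> < real (card M) * X"
    using large \<open>card M > 0\<close> by (simp add: K_def algebra_simps)
  finally have "(\<Sum>u\<in>U. real (bad u)) < card M"
    using \<open>1 \<le> X\<close> by (simp add: sum_distrib_right[symmetric])
  then show ?thesis
    unfolding bad_def M_def U_def by (simp only: of_nat_sum[symmetric] of_nat_less_iff)
qed

lemma exists_good_generator_matrix:
  fixes \<delta> :: real and k N :: nat
  defines "q \<equiv> real CARD('f::{field,finite})"
  assumes \<delta>: "0 < \<delta>" "\<delta> \<le> 1 - 1 / q"
    and large: "real (card (Pow (UNIV :: ('g::{ab_group_add,finite} \<Rightarrow> 'f) set))) * CARD('g)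
                  < q powr (real N - hq q \<delta> * (k + N))"
  shows "\<exists>A \<in> (generator_matrices k N :: (nat \<Rightarrow> nat \<Rightarrow> 'g \<Rightarrow> 'f) set). \<forall>u \<in> words k. u \<noteq> 0 \<longrightarrow>
           \<delta> * CARD('g) * real (k + N) \<le> real (hweight (k + N) (encode k N A u))"
proof -
  define M where "M = (generator_matrices k N :: (nat \<Rightarrow> nat \<Rightarrow> 'g \<Rightarrow> 'f) set)"
  define bad where "bad = (\<lambda>u. {A \<in> M. real (hweight (k + N) (encode k N A u)) \<le> \<delta> * CARD('g) * real (k + N)})"
  have "card (\<Union>u\<in>words k - {0}. bad u) \<le> (\<Sum>u\<in>words k - {0}. card (bad u))"
    using finite_words by (intro card_UN_le) blast
  also have "\<dots> < card M"
    using sum_card_light_encodings_less[OF \<delta>[unfolded q_def] large[unfolded q_def]]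
    by (simp add: bad_def M_def)
  finally have "(\<Union>u\<in>words k - {0}. bad u) \<noteq> M" by blast
  moreover have "(\<Union>u\<in>words k - {0}. bad u) \<subseteq> M" by (auto simp: bad_def)
  ultimately obtain A where A: "A \<in> M" "A \<notin> (\<Union>u\<in>words k - {0}. bad u)" by blast
  show ?thesis
  proof (intro bexI[of _ A] ballI impI)
    fix u :: "nat \<Rightarrow> 'g \<Rightarrow> 'f" assume "u \<in> words k" "u \<noteq> 0"
    then have "A \<notin> bad u" using A(2) by auto
    with A(1) show "\<delta> * CARD('g) * real (k + N) \<le> real (hweight (k + N) (encode k N A u))"
      by (auto simp: bad_def)
  qed (use A(1) in \<open>simp add: M_def\<close>)
qed

lemma min_weight_attained:
  assumes "C \<subseteq> words n" "c \<in> C" "c \<noteq> (\<lambda>_ _. 0)"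
  shows "\<exists>c\<in>C. c \<noteq> (\<lambda>_ _. 0) \<and> min_weight n C = hweight n (c :: nat \<Rightarrow> 'g::finite \<Rightarrow> 'f::zero)"
proof -
  define W where "W = {hweight n c | c. c \<in> C \<and> c \<noteq> (\<lambda>_ _. 0)}"
  have "finite W"
    by (rule finite_subset[of _ "{..n * CARD('g)}"]) (auto simp: W_def hweight_le)
  moreover have "W \<noteq> {}" using assms by (auto simp: W_def)
  ultimately have "Min W \<in> W" by (rule Min_in)
  then show ?thesis by (auto simp: W_def min_weight_def)
qed

lemma rel_dist_systematic_code_bounds:
  fixes A :: "nat \<Rightarrow> nat \<Rightarrow> 'g::{ab_group_add,finite} \<Rightarrow> 'f::field" and \<delta> :: real
  assumes "1 \<le> k"
    and good: "\<forall>u \<in> words k. u \<noteq> 0 \<longrightarrow> \<delta> * CARD('g) * real (k + N) \<le> real (hweight (k + N) (encode k N A u))"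
  shows "\<delta> \<le> rel_dist (k + N) (systematic_code k N A) \<and> rel_dist (k + N) (systematic_code k N A) \<le> 1"
proof -
  define C where "C = systematic_code k N A"
  txt \<open>A nonzero codeword is needed: \<open>min_weight\<close> is a \<open>Min\<close>, unspecified on \<open>{}\<close>.\<close>
  have "unit_word 0 0 \<in> words k"
    using \<open>1 \<le> k\<close> by (auto simp: words_def unit_word_def)
  then have "encode k N A (unit_word 0 0) \<in> C" unfolding C_def systematic_code_def by (rule imageI)
  moreover have "encode k N A (unit_word 0 0) 0 0 = 1"
    using \<open>1 \<le> k\<close> by (simp add: encode_less unit_word_def)
  then have "encode k N A (unit_word 0 0) \<noteq> (\<lambda>_ _. 0)" by (metis zero_neq_one)
  moreover have "C \<subseteq> words (k + N)"
    by (auto simp: C_def systematic_code_def encode_in_words)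
  ultimately obtain c where c: "c \<in> C" "c \<noteq> (\<lambda>_ _. 0)" "min_weight (k + N) C = hweight (k + N) c"
    using min_weight_attained by blast
  from c(1) obtain u where u: "u \<in> words k" "c = encode k N A u"
    by (auto simp: C_def systematic_code_def)
  have "u \<noteq> 0"
  proof
    assume "u = 0"
    then have "c = 0" using u(2) by simp
    with c(2) show False by (simp add: fun_eq_iff)
  qed
  have "0 < real CARD('g) * real (k + N)" using \<open>1 \<le> k\<close> by simp
  moreover have "\<delta> * CARD('g) * real (k + N) \<le> min_weight (k + N) C"
    using good u \<open>u \<noteq> 0\<close> c(3) by simp
  moreover have "min_weight (k + N) C \<le> (k + N) * CARD('g)"
    using c(3) hweight_le by simp
  then have "real (min_weight (k + N) C) \<le> real ((k + N) * CARD('g))"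
    by (simp only: of_nat_le_iff)
  ultimately show ?thesis
    by (simp add: C_def rel_dist_def field_simps)
qed

lemma good_systematic_code_exists:
  fixes \<delta> :: real and k N :: nat
  defines "q \<equiv> real CARD('f::{field,finite})"
  assumes \<delta>: "0 < \<delta>" "\<delta> \<le> 1 - 1 / q" and "1 \<le> k"
    and large: "real (card (Pow (UNIV :: ('g::{ab_group_add,finite} \<Rightarrow> 'f) set))) * CARD('g)
                  < q powr (real N - hq q \<delta> * (k + N))"
  shows "\<exists>C :: (nat \<Rightarrow> 'g \<Rightarrow> 'f) set. quasi_FG_code (k + N) C \<and> code_rate (k + N) C = k / (k + N)
           \<and> \<delta> \<le> rel_dist (k + N) C \<and> rel_dist (k + N) C \<le> 1"
proof -
  from exists_good_generator_matrix[OF \<delta>[unfolded q_def] large[unfolded q_def]]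
  obtain A :: "nat \<Rightarrow> nat \<Rightarrow> 'g \<Rightarrow> 'f" where "\<forall>u \<in> words k. u \<noteq> 0 \<longrightarrow>
      \<delta> * CARD('g) * real (k + N) \<le> real (hweight (k + N) (encode k N A u))"
    by blast
  then have "\<delta> \<le> rel_dist (k + N) (systematic_code k N A) \<and> rel_dist (k + N) (systematic_code k N A) \<le> 1"
    using \<open>1 \<le> k\<close> by (rule rel_dist_systematic_code_bounds[rotated])
  moreover have "code_rate (k + N) (systematic_code k N A) = k / (k + N)"
    using \<open>1 \<le> k\<close> by (simp add: code_rate_def dimF_systematic_code)
  ultimately show ?thesis
    using quasi_FG_code_systematic_code by blast
qed

section \<open>Asymptotics\<close>

text \<open>Take \<open>k = \<lfloor>r n\<rfloor>\<close> and \<open>N = n - k \<ge> (1 - r) n\<close>: then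
  \<open>N - hq q \<delta> * n \<ge> (gq q \<delta> - r) * n\<close>, which exceeds any bound.\<close>

lemma eventually_good_systematic_codes:
  fixes r \<delta> :: real
  defines "q \<equiv> real CARD('f::{field,finite})"
  assumes r: "0 < r" "r < 1" and \<delta>: "0 < \<delta>" "\<delta> \<le> 1 - 1 / q" and gv: "r < gq q \<delta>"
  shows "\<forall>\<^sub>F n in sequentially. \<exists>C :: (nat \<Rightarrow> 'g::{ab_group_add,finite} \<Rightarrow> 'f) set.
           quasi_FG_code n C \<and> code_rate n C = real (nat \<lfloor>r * n\<rfloor>) / n
           \<and> \<delta> \<le> rel_dist n C \<and> rel_dist n C \<le> 1"
proof -
  define K where "K = real (card (Pow (UNIV :: ('g \<Rightarrow> 'f) set))) * CARD('g)"
  have q1: "q > 1" using card_field_ge2[where 'f = 'f] by (simp add: q_def)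
  define c where "c = q powr (gq q \<delta> - r)"
  have "c > 1" using q1 gv by (simp add: c_def gr_one_powr)
  then obtain n1 where "K < c ^ n1" using real_arch_pow by blast
  then have "\<forall>\<^sub>F n in sequentially. K < c ^ n"
    unfolding eventually_sequentially
    using power_increasing[of n1 _ c] \<open>c > 1\<close> by (meson less_imp_le order.strict_trans2)
  moreover have "\<forall>\<^sub>F n in sequentially. 1 \<le> r * real n"
  proof (rule eventually_sequentiallyI)
    fix n assume "nat \<lceil>1 / r\<rceil> \<le> n"
    then have "1 / r \<le> real n" by linarith
    with r show "1 \<le> r * real n" by (simp add: field_simps)
  qed
  ultimately show ?thesis
  proof eventually_elim
    case (elim n)
    define k where "k = nat \<lfloor>r * n\<rfloor>"
    define N where "N = n - k"
    have "1 \<le> k" "real k \<le> r * n" using elim(2) by (simp_all add: k_def le_nat_floor)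
    moreover have "r * n \<le> n" using r mult_right_mono[of r 1 "real n"] by simp
    ultimately have n: "n = k + N" and "real N \<ge> (1 - r) * n"
      by (simp_all add: N_def of_nat_diff algebra_simps)
    have "K < q powr ((gq q \<delta> - r) * n)"
      using elim(1) q1 by (simp add: c_def powr_powr powr_realpow[symmetric] mult.commute)
    also have "\<dots> \<le> q powr (real N - hq q \<delta> * n)"
      using q1 \<open>real N \<ge> (1 - r) * n\<close> by (intro powr_mono) (simp_all add: gq_def algebra_simps)
    finally show ?case
      using good_systematic_code_exists[OF \<delta>[unfolded q_def] \<open>1 \<le> k\<close>, of N, unfolded n[symmetric]]
      by (simp add: K_def q_def k_def)
  qed
qed

lemma floor_mult_div_tendsto:
  fixes r :: real
  assumes "0 \<le> r"
  shows "(\<lambda>n. real (nat \<lfloor>r * real n\<rfloor>) / real n) \<longlonglongrightarrow> r"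
proof (rule tendsto_sandwich)
  show "\<forall>\<^sub>F n in sequentially. r - 1 / real n \<le> real (nat \<lfloor>r * real n\<rfloor>) / real n"
  proof (rule eventually_sequentiallyI)
    fix n :: nat assume "1 \<le> n"
    have "r - 1 / real n = (r * n - 1) / n" using \<open>1 \<le> n\<close> by (simp add: field_simps)
    also have "\<dots> \<le> real (nat \<lfloor>r * n\<rfloor>) / n"
      using assms by (intro divide_right_mono) linarith+
    finally show "r - 1 / real n \<le> real (nat \<lfloor>r * real n\<rfloor>) / real n" .
  qed
  show "\<forall>\<^sub>F n in sequentially. real (nat \<lfloor>r * real n\<rfloor>) / real n \<le> r"
  proof (rule eventually_sequentiallyI)
    fix n :: nat assume "1 \<le> n"
    have "real (nat \<lfloor>r * n\<rfloor>) \<le> r * n" using assms by simp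
    then show "real (nat \<lfloor>r * real n\<rfloor>) / real n \<le> r"
      using \<open>1 \<le> n\<close> by (simp add: field_simps)
  qed
  show "(\<lambda>n. r - 1 / real n) \<longlonglongrightarrow> r"
    using tendsto_diff[OF tendsto_const lim_inverse_n'] by simp
qed simp

lemma bounded_seq_has_convergent_subseq_ge:
  fixes f :: "nat \<Rightarrow> real"
  assumes "\<And>i. a \<le> f i" "\<And>i. f i \<le> b"
  shows "\<exists>\<sigma> l. strict_mono \<sigma> \<and> (f \<circ> \<sigma>) \<longlonglongrightarrow> l \<and> a \<le> l"
proof -
  have "\<bar>f i\<bar> \<le> \<bar>a\<bar> + \<bar>b\<bar>" for i
    using assms[of i] by arith
  then have "bounded (range f)"
    by (intro boundedI[of _ "\<bar>a\<bar> + \<bar>b\<bar>"]) auto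
  then obtain l \<sigma> where "strict_mono \<sigma>" "(f \<circ> \<sigma>) \<longlonglongrightarrow> l"
    using bounded_imp_convergent_subsequence by blast
  moreover have "a \<le> l"
    using \<open>(f \<circ> \<sigma>) \<longlonglongrightarrow> l\<close> assms(1) by (intro LIMSEQ_le_const) auto
  ultimately show ?thesis by blast
qed

lemma eventually_sequentially_choice:
  assumes "\<forall>\<^sub>F n in sequentially. \<exists>x. P n x"
  shows "\<exists>n0 f. \<forall>i. P (i + n0) (f i)"
proof -
  obtain n0 where "\<forall>n\<ge>n0. \<exists>x. P n x"
    using assms by (auto simp: eventually_sequentially)
  then have "\<forall>i. \<exists>x. P (i + n0) x" by simp
  then show ?thesis by (metis choice)
qed

theorem corollary6p2:
  fixes r \<delta> :: real
  assumes "r \<in> {0<..<1}"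
    and "\<delta> \<in> {0<..<1 - 1 / real CARD('f::{field,finite})}"
    and "r < gq (real CARD('f)) \<delta>"
  shows "\<exists>(n :: nat \<Rightarrow> nat) (C :: nat \<Rightarrow> (nat \<Rightarrow> 'g::{ab_group_add,finite} \<Rightarrow> 'f) set).
           (\<forall>i. quasi_FG_code (n i) (C i)) \<and>
           filterlim (\<lambda>i. CARD('g) * n i) at_top sequentially \<and>
           (\<lambda>i. code_rate (n i) (C i)) \<longlonglongrightarrow> r \<and>
           (\<exists>d. (\<lambda>i. rel_dist (n i) (C i)) \<longlonglongrightarrow> d \<and> d \<ge> \<delta>)"
proof -
  have "0 < r" "r < 1" "0 < \<delta>" "\<delta> \<le> 1 - 1 / real CARD('f)" using assms by auto
  from eventually_sequentially_choice[OF eventually_good_systematic_codes[OF this assms(3)]]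
  obtain n0 and C :: "nat \<Rightarrow> (nat \<Rightarrow> 'g \<Rightarrow> 'f) set" where C: "\<And>i. quasi_FG_code (i + n0) (C i)"
    "\<And>i. code_rate (i + n0) (C i) = real (nat \<lfloor>r * real (i + n0)\<rfloor>) / real (i + n0)"
    "\<And>i. \<delta> \<le> rel_dist (i + n0) (C i)" "\<And>i. rel_dist (i + n0) (C i) \<le> 1"
    by blast
  obtain \<sigma> d where \<sigma>: "strict_mono \<sigma>" and d: "(\<lambda>i. rel_dist (\<sigma> i + n0) (C (\<sigma> i))) \<longlonglongrightarrow> d" "\<delta> \<le> d"
    using bounded_seq_has_convergent_subseq_ge[of \<delta> "\<lambda>i. rel_dist (i + n0) (C i)" 1] C(3,4)
    by (auto simp: comp_def)
  have n: "filterlim (\<lambda>i. \<sigma> i + n0) sequentially sequentially"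
    using filterlim_compose[OF filterlim_add_const_nat_at_top filterlim_subseq[OF \<sigma>]] by simp
  show ?thesis
  proof (intro exI conjI allI)
    show "quasi_FG_code (\<sigma> i + n0) (C (\<sigma> i))" for i by (rule C(1))
    show "filterlim (\<lambda>i. CARD('g) * (\<sigma> i + n0)) at_top sequentially"
      by (rule filterlim_at_top_mono[OF n]) (simp add: Suc_le_eq)
    show "(\<lambda>i. code_rate (\<sigma> i + n0) (C (\<sigma> i))) \<longlonglongrightarrow> r"
      using filterlim_compose[OF floor_mult_div_tendsto n] assms(1) by (simp add: C(2))
  qed (use d in auto)
qed

end
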